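(* Suppose $\vdash(\nu P)\,\Pi\vec\varsigma$. Let $p,q\in P$ such that the sub-states $p\mapsto c$ and $q\mapsto\overline c$ occur in $\vec\varsigma$. Then $(\nu P)\,\Pi\vec\varsigma\to^\star(\nu P)\,\Pi\vec{\varsigma'}$ for some $\vec{\varsigma'}$ in which $\odot_c$ occurs.
   Context: Abstract machine: states $\sigma::=\sigma|\sigma'\mid(\nu p)\sigma\mid\varsigma$ with sub-states $p\mapsto\alpha$, $\mathsf{Candidate}_p$, $\alpha$ (points; actions $\alpha$ are $c$ or $\overline c$ for a channel $c$); $\odot_c$, $\mathsf{Match}_c(p,q)$ (channels); $\Box_s,\boxtimes_s,\mathsf{Select}_s(p),\mathsf{Reject}(p),\mathsf{Done}_s(p),\mathsf{Retry}_s$ (synchronizers), where a synchronizer $s$ is a finite partial function from points to actions written as a parallel composition of bindings $p\mapsto\alpha$, distinct synchronizers having disjoint domains. Transitions (closed under pi-calculus structural rules for $|$ and $\nu$): (I) $p\mapsto c|q\mapsto\overline c|\odot_c\to\mathsf{Candidate}_p|\mathsf{Candidate}_q|\mathsf{Match}_c(p,q)$; (II.i) for $p\in\mathrm{dom}(s)$, $\mathsf{Candidate}_p|\Box_s\to\boxtimes_s|\mathsf{Select}_s(p)$; (II.ii) for $p\in\mathrm{dom}(s)$, $\mathsf{Candidate}_p|\boxtimes_s\to\boxtimes_s|\mathsf{Reject}(p)$; (III.i) $\mathsf{Select}_s(p)|\mathsf{Select}_{s'}(q)|\mathsf{Match}_c(p,q)\to\mathsf{Done}_s(p)|\mathsf{Done}_{s'}(q)|\odot_c$;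 (III.ii) $\mathsf{Select}_s(p)|\mathsf{Reject}(q)|\mathsf{Match}_c(p,q)\to\mathsf{Retry}_s|\odot_c$; (III.iii) $\mathsf{Reject}(p)|\mathsf{Select}_s(q)|\mathsf{Match}_c(p,q)\to\mathsf{Retry}_s|\odot_c$; (III.iv) $\mathsf{Reject}(p)|\mathsf{Reject}(q)|\mathsf{Match}_c(p,q)\to\odot_c$; (IV.i) if $s(p)=\alpha$, $\mathsf{Done}_s(p)\to\alpha$; (IV.ii) if $\mathrm{dom}(s)=\vec p$, $\mathsf{Retry}_s\to(\nu\vec p)(\Box_s|s)$. Invariant $\vdash(\nu P)\Pi\vec\varsigma$, where $P$ is the set of points in $\vec\varsigma$, $\mathcal C$ the set of channels, $\mathcal S$ the set of synchronizers, $\mathcal C\cap P=\varnothing$, holds iff: (1) for every $p\in P$ there is a unique $s\in\mathcal S$ with $p\in\mathrm{dom}(s)$; letting $s(p)=\alpha$, at most one of $p\mapsto\alpha,\mathsf{Candidate}_p,\mathsf{Select}_s(p),\mathsf{Reject}(p),\mathsf{Done}_s(p),\mathsf{Retry}_s$ occurs in $\vec\varsigma$, and exactly one of $\Box_s,\boxtimes_s$ occurs; (2) for every $c\in\mathcal C$ exactly one of $\odot_c$ and $\mathsf{Match}_c(\_,\_)$ occurs; (3) for $p\in\mathrm{dom}(s)$: if one of $\mathsf{Select}_s(p),\mathsf{Reject}(p),\mathsf{Done}_s(p),\mathsf{Retry}_s$ occurs then $\boxtimes_s$ occurs; and if $\boxtimes_s$ occurs then there is at most one $p\in\mathrm{dom}(s)$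 such that one of $\mathsf{Select}_s(p),\mathsf{Done}_s(p),\mathsf{Retry}_s$ occurs; (4) $\mathsf{Match}_c(p,q)$ occurs iff there are (not necessarily distinct) $s,s'\in\mathcal S$ with $s(p)=c$, $s'(q)=\overline c$, one of $\mathsf{Candidate}_p,\mathsf{Select}_s(p),\mathsf{Reject}(p)$ occurring, and one of $\mathsf{Candidate}_q,\mathsf{Select}_{s'}(q),\mathsf{Reject}(q)$ occurring. *)

theory Defs
  imports Main "HOL-Library.Multiset"
begin

text \<open>Names: points and channels are drawn from one name type 'n
  (the invariant requires the set of channels and the set of points to be disjoint).\<close>

datatype 'n act = Chan 'n | CoChan 'n

fun act_chan :: "'n act \<Rightarrow> 'n" where
  "act_chan (Chan c) = c"
| "act_chan (CoChan c) = c"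

type_synonym 'n sync = "'n \<rightharpoonup> 'n act"

datatype 'n sub =
    Bind 'n "'n act"
  | Cand 'n
  | Act "'n act"
  | Circ 'n                     \<comment> \<open>\<odot>_c\<close>
  | Match 'n 'n 'n
  | SBox "'n sync"              \<comment> \<open>\<box>_s\<close>
  | SBoxX "'n sync"             \<comment> \<open>\<boxtimes>_s\<close>
  | Select "'n sync" 'n
  | Reject 'n
  | Done "'n sync" 'n
  | Retry "'n sync"

fun sub_points :: "'n sub \<Rightarrow> 'n set" where
  "sub_points (Bind p a) = {p}"
| "sub_points (Cand p) = {p}"
| "sub_points (Act a) = {}"
| "sub_points (Circ c) = {}"
| "sub_points (Match c p q) = {p, q}"
| "sub_points (SBox s) = dom s"
| "sub_points (SBoxX s) = dom s"
| "sub_points (Select s p) = insert p (dom s)"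
| "sub_points (Reject p) = {p}"
| "sub_points (Done s p) = insert p (dom s)"
| "sub_points (Retry s) = dom s"

fun sub_chans :: "'n sub \<Rightarrow> 'n set" where
  "sub_chans (Bind p a) = {act_chan a}"
| "sub_chans (Cand p) = {}"
| "sub_chans (Act a) = {act_chan a}"
| "sub_chans (Circ c) = {c}"
| "sub_chans (Match c p q) = {c}"
| "sub_chans (SBox s) = act_chan ` ran s"
| "sub_chans (SBoxX s) = act_chan ` ran s"
| "sub_chans (Select s p) = act_chan ` ran s"
| "sub_chans (Reject p) = {}"
| "sub_chans (Done s p) = act_chan ` ran s"
| "sub_chans (Retry s) = act_chan ` ran s"

fun sub_syncs :: "'n sub \<Rightarrow> 'n sync set" where
  "sub_syncs (SBox s) = {s}"
| "sub_syncs (SBoxX s) = {s}"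
| "sub_syncs (Select s p) = {s}"
| "sub_syncs (Done s p) = {s}"
| "sub_syncs (Retry s) = {s}"
| "sub_syncs _ = {}"

definition points :: "'n sub multiset \<Rightarrow> 'n set" where
  "points M = \<Union> (sub_points ` set_mset M)"

definition chans :: "'n sub multiset \<Rightarrow> 'n set" where
  "chans M = \<Union> (sub_chans ` set_mset M)"

definition syncs :: "'n sub multiset \<Rightarrow> 'n sync set" where
  "syncs M = \<Union> (sub_syncs ` set_mset M)"

definition sync_bindings :: "'n sync \<Rightarrow> 'n sub multiset" where
  "sync_bindings s = image_mset (\<lambda>p. Bind p (the (s p))) (mset_set (dom s))"

text \<open>A state (\<nu>P) \<Pi>\<varsigma> is represented by the pair (P, M), M the multiset of sub-states.
  Parallel composition is multiset union; closure under the structural rules for |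
  is expressed by the frame R.  Rule (IV.ii) creates a fresh copy (\<nu>p')(\<box>_s'|s') of s,
  with s' an alpha-renaming of s to names fresh for the whole state; by scope
  extrusion these names are added to the top-level binder.\<close>
inductive step :: "'n set \<times> 'n sub multiset \<Rightarrow> 'n set \<times> 'n sub multiset \<Rightarrow> bool" where
  r1: "step (P, {#Bind p (Chan c), Bind q (CoChan c), Circ c#} + R)
            (P, {#Cand p, Cand q, Match c p q#} + R)"
| r2i: "p \<in> dom s \<Longrightarrow> step (P, {#Cand p, SBox s#} + R) (P, {#SBoxX s, Select s p#} + R)"
| r2ii: "p \<in> dom s \<Longrightarrow> step (P, {#Cand p, SBoxX s#} + R) (P, {#SBoxX s, Reject p#} + R)"
| r3i: "step (P, {#Select s p, Select s' q, Match c p q#} + R)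
             (P, {#Done s p, Done s' q, Circ c#} + R)"
| r3ii: "step (P, {#Select s p, Reject q, Match c p q#} + R) (P, {#Retry s, Circ c#} + R)"
| r3iii: "step (P, {#Reject p, Select s q, Match c p q#} + R) (P, {#Retry s, Circ c#} + R)"
| r3iv: "step (P, {#Reject p, Reject q, Match c p q#} + R) (P, {#Circ c#} + R)"
| r4i: "s p = Some a \<Longrightarrow> step (P, {#Done s p#} + R) (P, {#Act a#} + R)"
| r4ii: "\<lbrakk> inj_on \<rho> (dom s); dom s' = \<rho> ` dom s; \<forall>p\<in>dom s. s' (\<rho> p) = s p;
           dom s' \<inter> (P \<union> points ({#Retry s#} + R) \<union> chans ({#Retry s#} + R)) = {} \<rbrakk>
         \<Longrightarrow> step (P, {#Retry s#} + R) (P \<union> dom s', {#SBox s'#} + sync_bindings s' + R)"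

definition match_count :: "'n sub multiset \<Rightarrow> 'n \<Rightarrow> nat" where
  "match_count M c = size (filter_mset (\<lambda>x. \<exists>p q. x = Match c p q) M)"

text \<open>The invariant \<turnstile> (\<nu>P) \<Pi>\<varsigma>.\<close>
definition wf_state :: "'n set \<Rightarrow> 'n sub multiset \<Rightarrow> bool" where
  "wf_state P M \<longleftrightarrow>
     P = points M \<and> chans M \<inter> P = {} \<and>
     (\<forall>s\<in>syncs M. finite (dom s)) \<and>
     (\<forall>s\<in>syncs M. \<forall>s'\<in>syncs M. s \<noteq> s' \<longrightarrow> dom s \<inter> dom s' = {}) \<and>
     \<comment> \<open>(1)\<close>
     (\<forall>p\<in>P. (\<exists>!s. s \<in> syncs M \<and> p \<in> dom s) \<and>
        (\<forall>s\<in>syncs M. p \<in> dom s \<longrightarrow>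
           count M (Bind p (the (s p))) + count M (Cand p) + count M (Select s p)
             + count M (Reject p) + count M (Done s p) + count M (Retry s) \<le> 1
           \<and> count M (SBox s) + count M (SBoxX s) = 1)) \<and>
     \<comment> \<open>(2)\<close>
     (\<forall>c\<in>chans M. count M (Circ c) + match_count M c = 1) \<and>
     \<comment> \<open>(3)\<close>
     (\<forall>s\<in>syncs M.
        (\<forall>p\<in>dom s. (Select s p \<in># M \<or> Reject p \<in># M \<or> Done s p \<in># M \<or> Retry s \<in># M)
                     \<longrightarrow> SBoxX s \<in># M) \<and>
        (SBoxX s \<in># M \<longrightarrow>
           (\<Sum>p\<in>dom s. count M (Select s p) + count M (Done s p)) + count M (Retry s) \<le> 1)) \<and>
     \<comment> \<open>(4)\<close>
     (\<forall>c p q. Match c p q \<in># M \<longleftrightarrow>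
        (\<exists>s\<in>syncs M. \<exists>s'\<in>syncs M. s p = Some (Chan c) \<and> s' q = Some (CoChan c) \<and>
           (Cand p \<in># M \<or> Select s p \<in># M \<or> Reject p \<in># M) \<and>
           (Cand q \<in># M \<or> Select s' q \<in># M \<or> Reject q \<in># M)))"

end

theory Submission
  imports Defs
begin

(* The bound end p |-> c only serves to make c a channel of the state.  By
   invariant (2) the channel is then either free already or occupied by a
   pending match Match_c(x,y).  By invariants (1) and (4) and the disjointness of
   synchronizers, the endpoints x and y are distinct, each belongs to a
   synchronizer that still carries its (open or closed) box, and each is a
   candidate or already resolved (selected or rejected).  A candidate can always be resolved by rule (II.i) or (II.ii)
   without disturbing the rest of the state, so at most two steps resolve both
   endpoints; one of the rules (III.i)-(III.iv) then consumes the match and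
   releases c. *)

definition has_box :: "'n sync \<Rightarrow> 'n sub multiset \<Rightarrow> bool" where
  "has_box t N \<longleftrightarrow> SBox t \<in># N \<or> SBoxX t \<in># N"

definition resolved :: "'n sync \<Rightarrow> 'n \<Rightarrow> 'n sub multiset \<Rightarrow> bool" where
  "resolved t x N \<longleftrightarrow> Select t x \<in># N \<or> Reject x \<in># N"

text \<open>Distinct members of a multiset form a sub-multiset; this is what lets a
  rule, stated for a redex plus frame, fire inside an arbitrary state.\<close>
lemma distinct_members_subset2:
  "a \<in># N \<Longrightarrow> b \<in># N \<Longrightarrow> a \<noteq> b \<Longrightarrow> {#a, b#} \<subseteq># N"
  by (auto simp: subseteq_mset_def Suc_le_eq)

lemma distinct_members_subset3:
  "a \<in># N \<Longrightarrow> b \<in># N \<Longrightarrow> d \<in># N \<Longrightarrow> a \<noteq> b \<Longrightarrow> a \<noteq> d \<Longrightarrow> b \<noteq> d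
   \<Longrightarrow> {#a, b, d#} \<subseteq># N"
  by (auto simp: subseteq_mset_def Suc_le_eq)

lemma step_in_state:
  assumes "A \<subseteq># N" and "step (P, A + (N - A)) S"
  shows "step (P, N) S"
  using assms(2) unfolding subset_mset.add_diff_inverse[OF assms(1)] .

lemma candidate_step:
  assumes cand: "Cand x \<in># N" and x: "x \<in> dom t" and box: "has_box t N"
  shows "\<exists>N'. step (P, N) (P, N') \<and> resolved t x N' \<and> SBoxX t \<in># N'
           \<and> (\<forall>z. z \<in># N \<longrightarrow> z \<noteq> Cand x \<longrightarrow> z \<noteq> SBox t \<longrightarrow> z \<in># N')"
proof (cases "SBox t \<in># N")
  case True
  define R where "R = N - {#Cand x, SBox t#}"
  have "step (P, N) (P, {#SBoxX t, Select t x#} + R)"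
    using step_in_state[OF distinct_members_subset2[OF cand True] step.r2i[OF x]]
    by (simp add: R_def)
  then show ?thesis
    unfolding resolved_def by (intro exI[of _ "{#SBoxX t, Select t x#} + R"])
      (auto simp: R_def in_diff_count)
next
  case False
  then have closed: "SBoxX t \<in># N" using box by (simp add: has_box_def)
  define R where "R = N - {#Cand x, SBoxX t#}"
  have "step (P, N) (P, {#SBoxX t, Reject x#} + R)"
    using step_in_state[OF distinct_members_subset2[OF cand closed] step.r2ii[OF x]]
    by (simp add: R_def)
  then show ?thesis
    unfolding resolved_def using closed
    by (intro exI[of _ "{#SBoxX t, Reject x#} + R"]) (auto simp: R_def in_diff_count)
qed

lemma resolve_point:
  assumes ready: "Cand x \<in># N \<or> resolved t x N" and x: "x \<in> dom t" and box: "has_box t N"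
  shows "\<exists>N'. step\<^sup>*\<^sup>* (P, N) (P, N') \<and> resolved t x N'
           \<and> (\<forall>t'. has_box t' N \<longrightarrow> has_box t' N')
           \<and> (\<forall>z. z \<in># N \<longrightarrow> z \<noteq> Cand x \<longrightarrow> z \<noteq> SBox t \<longrightarrow> z \<in># N')"
proof (cases "resolved t x N")
  case True
  then show ?thesis by blast
next
  case False
  then have "Cand x \<in># N" using ready by blast
  from candidate_step[OF this x box, of P] obtain N' where
    st: "step (P, N) (P, N')" and res: "resolved t x N'" and closed: "SBoxX t \<in># N'"
    and keep: "\<forall>z. z \<in># N \<longrightarrow> z \<noteq> Cand x \<longrightarrow> z \<noteq> SBox t \<longrightarrow> z \<in># N'"
    by blast
  have "\<forall>t'. has_box t' N \<longrightarrow> has_box t' N'"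
    using keep closed by (auto simp: has_box_def)
  with st res keep show ?thesis by blast
qed

lemma resolve_match_endpoints:
  assumes match: "Match c x y \<in># N" and xy: "x \<noteq> y"
    and x: "x \<in> dom t" "Cand x \<in># N \<or> resolved t x N" "has_box t N"
    and y: "y \<in> dom t'" "Cand y \<in># N \<or> resolved t' y N" "has_box t' N"
  shows "\<exists>N'. step\<^sup>*\<^sup>* (P, N) (P, N') \<and> Match c x y \<in># N'
           \<and> resolved t x N' \<and> resolved t' y N'"
proof -
  obtain N1 where st1: "step\<^sup>*\<^sup>* (P, N) (P, N1)" and x1: "resolved t x N1"
    and boxes1: "\<forall>s. has_box s N \<longrightarrow> has_box s N1"
    and keep1: "\<forall>z. z \<in># N \<longrightarrow> z \<noteq> Cand x \<longrightarrow> z \<noteq> SBox t \<longrightarrow> z \<in># N1"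
    using resolve_point[OF x(2,1,3)] by blast
  have "Cand y \<in># N1 \<or> resolved t' y N1"
    using y(2) keep1 xy by (auto simp: resolved_def)
  then obtain N2 where st2: "step\<^sup>*\<^sup>* (P, N1) (P, N2)" and y2: "resolved t' y N2"
    and keep2: "\<forall>z. z \<in># N1 \<longrightarrow> z \<noteq> Cand y \<longrightarrow> z \<noteq> SBox t' \<longrightarrow> z \<in># N2"
    using resolve_point[OF _ y(1)] boxes1 y(3) by blast
  have "Match c x y \<in># N2" using match keep1 keep2 by simp
  moreover have "resolved t x N2" using x1 keep2 by (auto simp: resolved_def)
  ultimately show ?thesis using st1 st2 y2 by (meson rtranclp_trans)
qed

lemma resolved_match_frees_channel:
  assumes match: "Match c x y \<in># N" and xy: "x \<noteq> y"
    and x: "resolved t x N" and y: "resolved t' y N"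
  shows "\<exists>N'. step (P, N) (P, N') \<and> Circ c \<in># N'"
proof -
  have redex: "{#a, b, Match c x y#} \<subseteq># N"
    if "a \<in># N" "b \<in># N" "a \<noteq> b" "a \<noteq> Match c x y" "b \<noteq> Match c x y" for a b
    using that match by (intro distinct_members_subset3) auto
  from x y show ?thesis
    unfolding resolved_def
  proof (elim disjE)
    assume "Select t x \<in># N" "Select t' y \<in># N"
    with xy have "step (P, N) (P, {#Done t x, Done t' y, Circ c#}
                    + (N - {#Select t x, Select t' y, Match c x y#}))"
      by (intro step_in_state[OF redex[of "Select t x" "Select t' y"]] step.r3i) auto
    then show ?thesis by auto
  next
    assume "Select t x \<in># N" "Reject y \<in># N"
    then have "step (P, N) (P, {#Retry t, Circ c#} + (N - {#Select t x, Reject y, Match c x y#}))"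
      by (intro step_in_state[OF redex[of "Select t x" "Reject y"]] step.r3ii) auto
    then show ?thesis by auto
  next
    assume "Reject x \<in># N" "Select t' y \<in># N"
    then have "step (P, N) (P, {#Retry t', Circ c#} + (N - {#Reject x, Select t' y, Match c x y#}))"
      by (intro step_in_state[OF redex[of "Reject x" "Select t' y"]] step.r3iii) auto
    then show ?thesis by auto
  next
    assume "Reject x \<in># N" "Reject y \<in># N"
    with xy have "step (P, N) (P, {#Circ c#} + (N - {#Reject x, Reject y, Match c x y#}))"
      by (intro step_in_state[OF redex[of "Reject x" "Reject y"]] step.r3iv) auto
    then show ?thesis by auto
  qed
qed

lemma wf_points: "wf_state P M \<Longrightarrow> P = points M"
  unfolding wf_state_def by (elim conjE)

lemma wf_disjoint:
  "wf_state P M \<Longrightarrow> s \<in> syncs M \<Longrightarrow> s' \<in> syncs M \<Longrightarrow> s \<noteq> s' \<Longrightarrow> dom s \<inter> dom s' = {}"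
  unfolding wf_state_def by (elim conjE) simp

lemma wf_box:
  "wf_state P M \<Longrightarrow> p \<in> P \<Longrightarrow> s \<in> syncs M \<Longrightarrow> p \<in> dom s
   \<Longrightarrow> count M (SBox s) + count M (SBoxX s) = 1"
  unfolding wf_state_def by (elim conjE) simp

lemma wf_channel:
  "wf_state P M \<Longrightarrow> c \<in> chans M \<Longrightarrow> count M (Circ c) + match_count M c = 1"
  unfolding wf_state_def by (elim conjE) simp

lemma wf_match:
  "wf_state P M \<Longrightarrow> Match c p q \<in># M \<Longrightarrow>
     \<exists>s\<in>syncs M. \<exists>s'\<in>syncs M. s p = Some (Chan c) \<and> s' q = Some (CoChan c) \<and>
       (Cand p \<in># M \<or> Select s p \<in># M \<or> Reject p \<in># M) \<and>
       (Cand q \<in># M \<or> Select s' q \<in># M \<or> Reject q \<in># M)"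
  unfolding wf_state_def by (elim conjE) simp

lemma syncs_dom_subset_points:
  assumes "s \<in> syncs M"
  shows "dom s \<subseteq> points M"
proof -
  obtain z where z: "z \<in># M" and s: "s \<in> sub_syncs z"
    using assms unfolding syncs_def by blast
  from s have "dom s \<subseteq> sub_points z" by (cases z) auto
  with z show ?thesis unfolding points_def by blast
qed

lemma wf_has_box:
  assumes wf: "wf_state P M" and s: "s \<in> syncs M" and x: "x \<in> dom s"
  shows "has_box s M"
proof -
  have "x \<in> P" using syncs_dom_subset_points[OF s] x unfolding wf_points[OF wf] by blast
  then have "count M (SBox s) + count M (SBoxX s) = 1"
    using wf_box[OF wf _ s x] by blast
  then show ?thesis unfolding has_box_def count_greater_zero_iff[symmetric] by linarith
qed

lemma wf_busy_channel_has_match: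
  assumes wf: "wf_state P M" and c: "c \<in> chans M" and busy: "Circ c \<notin># M"
  shows "\<exists>x y. Match c x y \<in># M"
proof -
  have "count M (Circ c) + match_count M c = 1" using wf_channel[OF wf c] .
  then have "match_count M c = 1" using busy by (simp add: not_in_iff)
  then obtain z where "z \<in># filter_mset (\<lambda>z. \<exists>x y. z = Match c x y) M"
    unfolding match_count_def by (metis multiset_nonemptyE one_neq_zero size_empty)
  then show ?thesis by auto
qed

text \<open>They are
  distinct because one is bound to c and the other to its co-action, so they
  would lie in two different synchronizers with overlapping domains.\<close>
lemma wf_match_endpoints:
  assumes wf: "wf_state P M" and match: "Match c x y \<in># M"
  shows "x \<noteq> y \<and> (\<exists>t t'. x \<in> dom t \<and> (Cand x \<in># M \<or> resolved t x M) \<and> has_box t M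
                          \<and> y \<in> dom t' \<and> (Cand y \<in># M \<or> resolved t' y M) \<and> has_box t' M)"
proof -
  obtain t t' where t: "t \<in> syncs M" "t x = Some (Chan c)"
    and t': "t' \<in> syncs M" "t' y = Some (CoChan c)"
    and x: "Cand x \<in># M \<or> resolved t x M" and y: "Cand y \<in># M \<or> resolved t' y M"
    using wf_match[OF wf match] unfolding resolved_def by blast
  have "x \<noteq> y"
  proof
    assume "x = y"
    then have "t \<noteq> t'" and "x \<in> dom t \<inter> dom t'" using t t' by auto
    then show False using wf_disjoint[OF wf t(1) t'(1)] by blast
  qed
  moreover have "x \<in> dom t" "y \<in> dom t'" using t(2) t'(2) by auto
  ultimately show ?thesis using x y wf_has_box[OF wf t(1)] wf_has_box[OF wf t'(1)] by blast
qed

lemma wf_match_completes: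
  assumes wf: "wf_state P M" and match: "Match c x y \<in># M"
  shows "\<exists>M'. step\<^sup>*\<^sup>* (P, M) (P, M') \<and> Circ c \<in># M'"
proof -
  obtain t t' where xy: "x \<noteq> y"
    and x: "x \<in> dom t" "Cand x \<in># M \<or> resolved t x M" "has_box t M"
    and y: "y \<in> dom t'" "Cand y \<in># M \<or> resolved t' y M" "has_box t' M"
    using wf_match_endpoints[OF wf match] by blast
  obtain N where to_N: "step\<^sup>*\<^sup>* (P, M) (P, N)" and "Match c x y \<in># N"
    and "resolved t x N" "resolved t' y N"
    using resolve_match_endpoints[OF match xy x y] by blast
  then obtain M' where "step (P, N) (P, M')" and "Circ c \<in># M'"
    using resolved_match_frees_channel[OF _ xy] by blast
  with to_N show ?thesis by (meson rtranclp.rtrancl_into_rtrancl)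
qed

theorem mainTheorem3:
  fixes P :: "'n set" and M :: "'n sub multiset" and p q c :: 'n
  assumes "wf_state P M"
    and "p \<in> P" and "q \<in> P"
    and "Bind p (Chan c) \<in># M" and "Bind q (CoChan c) \<in># M"
  shows "\<exists>M'. step\<^sup>*\<^sup>* (P, M) (P, M') \<and> Circ c \<in># M'"
proof (cases "Circ c \<in># M")
  case True
  then show ?thesis by blast
next
  case False
  have "c \<in> chans M" using assms(4) unfolding chans_def by force
  then obtain x y where "Match c x y \<in># M"
    using wf_busy_channel_has_match[OF assms(1) _ False] by blast
  then show ?thesis using wf_match_completes[OF assms(1)] by blast
qed

end
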